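(* Assume $\mu_*<1$. Then the probability measure $\wp$ on $\Omega_+$ is continuous, i.e. $\wp(\{\widehat\zeta^{(0)}\})=0$ for every point $\widehat\zeta^{(0)}\in\Omega_+$.
   Context: Model. Fix $d\ge1$. $(X_t,\xi_t)_{t\in\mathbb{Z}_+}$ is a Markov chain with $X_t\in\mathbb{Z}^d$, $X_0=0$, $\xi_t\in\Omega:=\{-1,+1\}^{\mathbb{Z}^d}$. Given $X_t=x,\xi_t=\bar\xi$, the next position and the next environment are conditionally independent; $P(X_{t+1}=x+u\mid X_t=x,\xi_t=\bar\xi)=P_0(u)+\epsilon c(u)\bar\xi(x)$, where $\epsilon>0$, $P_0$ is an even, finite-range probability distribution on $\mathbb{Z}^d$ with $|\sum_u P_0(u)e^{i(\lambda,u)}|=1$ iff $\lambda=0$ and such that $1/\tilde p_0(\lambda)$ (with $\tilde p_0(\lambda)=\sum_u P_0(u)e^{i(\lambda,u)}$) has absolutely summable Fourier coefficients, and $c$ is an odd finite-range real function with $P_0(u)\pm\epsilon c(u)\in[0,1)$. Given $X_t=x,\xi_t=\bar\xi$, the values $\xi_{t+1}(y)$, $y\in\mathbb{Z}^d$, are independent with $P(\xi_{t+1}(y)=s)=Q_0(\bar\xi(y),s)$ if $y\ne x$ and $Q_1(\bar\xi(y),s)$ if $y=x$, where $Q_0,Q_1$ are symmetric $2\times2$ stochastic matrices, $Q_0$ has eigenvalues $1,\mu$ with $0<|\mu|<1$, and $Q_1-Q_0=O(\epsilon)$. The environment seen from the walk, $\eta_t(x)=\xi_t(X_t+x)$, is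 a Markov chain on $\Omega$ with stochastic operator $(\mathcal T f)(\bar\eta)=\mathcal E[f(\eta_{t+1})\mid\eta_t=\bar\eta]$. $\Pi_0$ is the product of uniform measures on $\{\pm1\}$. For finite $\Gamma\subset\mathbb{Z}^d$ let $\Phi_\Gamma(\eta)=\prod_{x\in\Gamma}\eta(x)$, $\Phi_\emptyset=1$; each $f\in L^2(\Omega,\Pi_0)$ is written $f=\sum_\Gamma f_\Gamma\Phi_\Gamma$. For a fixed $M>1$, $\mathcal H_M=\{f:\|f\|_M:=\sum_\Gamma|f_\Gamma|M^{|\Gamma|}<\infty\}$. Standing assumptions (valid for $\epsilon,|\mu|$ small): $\mathcal T$ maps $\mathcal H_M$ into itself; the chain $(\eta_t)$ has an invariant probability measure $\Pi$, absolutely continuous w.r.t. $\Pi_0$ with bounded density; there is $\bar\mu\in(0,1)$ with $\|\mathcal T f\|_M\le\bar\mu\|f\|_M$ for all $f\in\widehat{\mathcal H}_M:=\{f\in\mathcal H_M:\int f\,d\Pi=0\}$. The dynamics and $\Pi$ are invariant under the global spin flip $\eta\mapsto-\eta$. Path space notation: $\mathcal P_\Pi$ is the law of $(\eta_t)_{t\ge0}$ with $\eta_0\sim\Pi$. $\zeta_t:=\eta_t(0)$, $\widehat\zeta=(\zeta_t)_{t\ge0}\in\Omega_+:=\{\pm1\}^{\mathbb{Z}_+}$, and $\wp$ is the law of $\widehat\zeta$ under $\mathcal P_\Pi$ (a probability on $\Omega_+$ with its cylinder $\sigma$-algebra). $\mu_*:=M\sqrt{\bar\mu(1+2\bar\mu)}$.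 *)

theory Defs
  imports "HOL-Probability.Probability"
begin

text \<open>Sites of Z^d are vectors int^'d ('d a finite index type, d = CARD('d) >= 1).
  A configuration eta in Omega = {-1,+1}^(Z^d) is encoded as a map to bool,
  True standing for +1 and False for -1.\<close>

type_synonym 'd config = "(int ^ 'd) \<Rightarrow> bool"

definition spin :: "bool \<Rightarrow> real" where
  "spin b = (if b then 1 else -1)"

definition Omega_M :: "('d::finite) config measure" where
  "Omega_M = PiM UNIV (\<lambda>_. count_space UNIV)"

definition Pi0 :: "('d::finite) config measure" where
  "Pi0 = PiM UNIV (\<lambda>_. measure_pmf (pmf_of_set (UNIV :: bool set)))"

definition Phi :: "(int ^ 'd) set \<Rightarrow> ('d::finite) config \<Rightarrow> real" where
  "Phi \<Gamma> \<eta> = (\<Prod>x\<in>\<Gamma>. spin (\<eta> x))"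

definition walsh_coeff :: "(('d::finite) config \<Rightarrow> real) \<Rightarrow> (int ^ 'd) set \<Rightarrow> real" where
  "walsh_coeff f \<Gamma> = (\<integral>\<eta>. f \<eta> * Phi \<Gamma> \<eta> \<partial>Pi0)"

definition normM :: "real \<Rightarrow> (('d::finite) config \<Rightarrow> real) \<Rightarrow> ennreal" where
  "normM M f = (\<integral>\<^sup>+ \<Gamma>. ennreal (\<bar>walsh_coeff f \<Gamma>\<bar> * M ^ card \<Gamma>)
                  \<partial>count_space {\<Gamma> :: (int ^ 'd) set. finite \<Gamma>})"

definition HM :: "real \<Rightarrow> (('d::finite) config \<Rightarrow> real) set" where
  "HM M = {f. f \<in> borel_measurable Pi0 \<and> integrable Pi0 (\<lambda>\<eta>. (f \<eta>)\<^sup>2) \<and> normM M f < \<top>}"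

definition ptilde :: "((int ^ 'd) \<Rightarrow> real) \<Rightarrow> real ^ ('d::finite) \<Rightarrow> complex" where
  "ptilde P0 l = (\<Sum>u\<in>{u. P0 u \<noteq> 0}. complex_of_real (P0 u) * cis (\<Sum>i\<in>UNIV. l $ i * real_of_int (u $ i)))"

text \<open>Hypotheses on the walk: P_0 even finite-range probability, aperiodicity
  (|ptilde| = 1 on the torus only at 0), 1/ptilde in the Wiener algebra (absolutely summable
  Fourier coefficients a), c odd finite-range with P_0 +- eps c in [0,1), eps > 0.\<close>
definition walk_assumptions :: "((int ^ 'd) \<Rightarrow> real) \<Rightarrow> ((int ^ 'd) \<Rightarrow> real) \<Rightarrow> real \<Rightarrow> bool" where
  "walk_assumptions P0 c \<epsilon> \<longleftrightarrow>
     \<epsilon> > 0 \<and>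
     (\<forall>u. P0 u \<ge> 0) \<and> finite {u. P0 u \<noteq> 0} \<and> (\<Sum>u\<in>{u. P0 u \<noteq> 0}. P0 u) = 1 \<and>
     (\<forall>u. P0 (- u) = P0 u) \<and>
     (\<forall>l::real ^ ('d::finite). (\<forall>i. - pi < l $ i \<and> l $ i \<le> pi) \<longrightarrow>
          (cmod (ptilde P0 l) = 1 \<longleftrightarrow> l = 0)) \<and>
     (\<exists>a :: (int ^ 'd) \<Rightarrow> complex. (\<lambda>x. norm (a x)) summable_on UNIV \<and>
          (\<forall>l. ptilde P0 l * (\<Sum>\<^sub>\<infinity>x. a x * cis (\<Sum>i\<in>UNIV. l $ i * real_of_int (x $ i))) = 1)) \<and>
     finite {u. c u \<noteq> 0} \<and> (\<forall>u. c (- u) = - c u) \<and>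
     (\<forall>u. 0 \<le> P0 u + \<epsilon> * c u \<and> P0 u + \<epsilon> * c u < 1 \<and>
          0 \<le> P0 u - \<epsilon> * c u \<and> P0 u - \<epsilon> * c u < 1)"

definition sym_stoch :: "(bool \<Rightarrow> bool \<Rightarrow> real) \<Rightarrow> bool" where
  "sym_stoch Q \<longleftrightarrow> (\<forall>a b. 0 \<le> Q a b \<and> Q a b = Q b a) \<and> (\<forall>a. Q a True + Q a False = 1)"

text \<open>Second eigenvalue mu of a 2x2 stochastic matrix (eigenvalues 1 and trace - 1).\<close>
definition second_eig :: "(bool \<Rightarrow> bool \<Rightarrow> real) \<Rightarrow> real" where
  "second_eig Q = Q True True + Q False False - 1"

definition step_supp :: "((int ^ 'd) \<Rightarrow> real) \<Rightarrow> ((int ^ 'd) \<Rightarrow> real) \<Rightarrow> (int ^ 'd) set" where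
  "step_supp P0 c = {u. P0 u \<noteq> 0 \<or> c u \<noteq> 0}"

definition step_prob :: "((int ^ 'd) \<Rightarrow> real) \<Rightarrow> real \<Rightarrow> ((int ^ 'd) \<Rightarrow> real) \<Rightarrow> ('d::finite) config \<Rightarrow> (int ^ 'd) \<Rightarrow> real" where
  "step_prob P0 \<epsilon> c \<eta> u = P0 u + \<epsilon> * c u * spin (\<eta> 0)"

text \<open>Law of the updated environment (in coordinates relative to the old walker position):
  independent sites, Q_1 at the walker's site 0, Q_0 elsewhere.\<close>
definition env_meas :: "(bool \<Rightarrow> bool \<Rightarrow> real) \<Rightarrow> (bool \<Rightarrow> bool \<Rightarrow> real) \<Rightarrow> ('d::finite) config \<Rightarrow> 'd config measure" where
  "env_meas Q0 Q1 \<eta> = PiM UNIV (\<lambda>y. measure_pmf (bernoulli_pmf ((if y = 0 then Q1 else Q0) (\<eta> y) True)))"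

text \<open>Stochastic operator of the environment seen from the walk:
  (T f)(eta) = E[f(eta_{t+1}) | eta_t = eta], with eta_{t+1}(x) = xi_{t+1}(u + x).\<close>
definition Tmap :: "((int ^ 'd) \<Rightarrow> real) \<Rightarrow> ((int ^ 'd) \<Rightarrow> real) \<Rightarrow> real \<Rightarrow>
    (bool \<Rightarrow> bool \<Rightarrow> real) \<Rightarrow> (bool \<Rightarrow> bool \<Rightarrow> real) \<Rightarrow>
    (('d::finite) config \<Rightarrow> real) \<Rightarrow> 'd config \<Rightarrow> real" where
  "Tmap P0 c \<epsilon> Q0 Q1 f \<eta> =
     (\<Sum>u\<in>step_supp P0 c. step_prob P0 \<epsilon> c \<eta> u *
        (\<integral>\<xi>. f (\<lambda>x. \<xi> (u + x)) \<partial>env_meas Q0 Q1 \<eta>))"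

definition Omega_plus :: "(nat \<Rightarrow> bool) measure" where
  "Omega_plus = PiM UNIV (\<lambda>_. count_space UNIV)"

text \<open>cylf T [s_0,...,s_n] = g_{s_0} T(g_{s_1} T(... T(g_{s_n}))), g_s(eta) = 1[eta(0) = s];
  its Pi-integral is P_Pi(zeta_0 = s_0, ..., zeta_n = s_n) for the Markov chain with operator T.\<close>
primrec cylf :: "((('d::finite) config \<Rightarrow> real) \<Rightarrow> 'd config \<Rightarrow> real) \<Rightarrow> bool list \<Rightarrow> 'd config \<Rightarrow> real" where
  "cylf T [] = (\<lambda>_. 1)"
| "cylf T (b # bs) = (\<lambda>\<eta>. (if \<eta> 0 = b then 1 else 0) * T (cylf T bs) \<eta>)"

end

theory Submission
  imports Defs
begin

text \<open>Whatever the current environment, the value of \<open>\<zeta>\<^sub>t\<^sub>+\<^sub>1\<close> is fixed with probability at most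
  \<open>\<theta> = m + (1 - m) P\<^sub>0(0) < 1\<close>, where \<open>m < 1\<close> bounds the entries of \<open>Q\<^sub>0\<close>: the walker stays put only
  with probability \<open>P\<^sub>0(0) < 1\<close> (because \<open>c(0) = 0\<close>), and after a genuine jump the spin it reads
  has just been refreshed by \<open>Q\<^sub>0\<close> independently of the past. Hence every cylinder of length
  \<open>n + 1\<close> has \<open>\<wp>\<close>-mass at most \<open>\<theta>\<^sup>n\<close>, and so has every point.\<close>

lemma (in finite_measure) integral_le_scaled_measure:
  fixes F :: "'a \<Rightarrow> real"
  assumes A: "A \<in> sets M" and K: "0 \<le> K"
    and F_le: "\<And>x. x \<in> space M \<Longrightarrow> F x \<le> K * indicator A x"
  shows "integral\<^sup>L M F \<le> K * measure M A"
proof (cases "integrable M F")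
  case True
  have "integrable M (indicator A :: 'a \<Rightarrow> real)"
    using A by (intro integrable_real_indicator) (simp_all add: less_top[symmetric])
  then have "integral\<^sup>L M F \<le> integral\<^sup>L M (\<lambda>x. K * indicator A x)"
    using True F_le by (intro Bochner_Integration.integral_mono integrable_mult_right) auto
  also have "\<dots> = K * measure M A" using A by simp
  finally show ?thesis .
next
  case False
  then show ?thesis using K by (simp add: not_integrable_integral_eq)
qed

lemma (in prob_space) integral_le_const_nonneg:
  fixes F :: "'a \<Rightarrow> real"
  assumes "\<And>x. x \<in> space M \<Longrightarrow> 0 \<le> F x" "\<And>x. x \<in> space M \<Longrightarrow> F x \<le> K"
  shows "integral\<^sup>L M F \<le> K"
proof -
  have "space M \<noteq> {}" by (rule not_empty)
  then obtain x where x: "x \<in> space M" by auto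
  have "0 \<le> K" using assms(1)[OF x] assms(2)[OF x] by linarith
  then have "integral\<^sup>L M F \<le> K * measure M (space M)"
    using assms by (intro integral_le_scaled_measure) auto
  then show ?thesis by (simp add: prob_space)
qed

lemma sym_stoch_entries_bounded:
  assumes "sym_stoch Q" "\<bar>second_eig Q\<bar> < 1"
  obtains m where "0 \<le> m" "m < 1" "\<And>x y. Q x y \<le> m"
proof -
  have "Q True True + Q True False = 1" "Q False True + Q False False = 1" "Q True False = Q False True"
    "0 \<le> Q True True" "0 \<le> Q True False"
    using assms(1) by (auto simp: sym_stoch_def)
  moreover have "\<bar>Q True True + Q False False - 1\<bar> < 1" using assms(2) by (simp add: second_eig_def)
  ultimately have bounds: "0 \<le> max (Q True True) (Q True False)" "max (Q True True) (Q True False) < 1"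
    "Q x y \<le> max (Q True True) (Q True False)" for x y
    by (cases x; cases y; auto)+
  show ?thesis by (rule that[OF bounds(1,2)]) (rule bounds(3))
qed

lemma prob_space_env_meas: "prob_space (env_meas Q0 Q1 \<eta>)"
  unfolding env_meas_def by (rule prob_space_PiM) (auto simp: prob_space_measure_pmf)

lemma sets_env_meas_coordinate: "{\<xi>. \<xi> y = s} \<in> sets (env_meas Q0 Q1 (\<eta>::('d::finite) config))"
proof -
  have "{\<xi>. \<xi> y = s} = {\<xi> \<in> space (env_meas Q0 Q1 \<eta>). \<xi> y \<in> {s}}"
    by (auto simp: env_meas_def space_PiM)
  also have "\<dots> \<in> sets (env_meas Q0 Q1 \<eta>)"
    unfolding env_meas_def by (rule sets_Collect_single') auto
  finally show ?thesis .
qed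

lemma measure_env_meas_coordinate:
  "measure (env_meas Q0 Q1 (\<eta>::('d::finite) config)) {\<xi>. \<xi> y = s}
     = pmf (bernoulli_pmf ((if y = 0 then Q1 else Q0) (\<eta> y) True)) s"
proof -
  define N where "N = (\<lambda>y. measure_pmf (bernoulli_pmf ((if y = 0 then Q1 else Q0) (\<eta> y) True)))"
  have env: "env_meas Q0 Q1 \<eta> = PiM UNIV N" by (simp add: env_meas_def N_def)
  have "measure (N y) {s} = measure (distr (PiM UNIV N) (N y) (\<lambda>\<omega>. \<omega> y)) {s}"
    by (subst distr_PiM_component) (auto simp: N_def prob_space_measure_pmf)
  also have "\<dots> = measure (PiM UNIV N) ((\<lambda>\<omega>. \<omega> y) -` {s} \<inter> space (PiM UNIV N))"
    by (rule measure_distr) (auto simp: N_def)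
  also have "(\<lambda>\<omega>. \<omega> y) -` {s} \<inter> space (PiM UNIV N) = {\<xi>. \<xi> y = s}"
    by (auto simp: space_PiM N_def)
  finally show ?thesis by (simp add: env N_def measure_pmf_single)
qed

lemma measure_env_meas_off_walker:
  assumes "sym_stoch Q0" "y \<noteq> 0"
  shows "measure (env_meas Q0 Q1 (\<eta>::('d::finite) config)) {\<xi>. \<xi> y = s} = Q0 (\<eta> y) s"
proof -
  have "0 \<le> Q0 (\<eta> y) b" "Q0 (\<eta> y) True + Q0 (\<eta> y) False = 1" for b
    using assms(1) by (auto simp: sym_stoch_def)
  moreover from this have "Q0 (\<eta> y) True \<le> 1" by (metis le_add_same_cancel1)
  ultimately show ?thesis
    using assms(2) measure_env_meas_coordinate[of Q0 Q1 \<eta> y s] by (cases s) auto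
qed

context
  fixes P0 c :: "(int ^ ('d::finite)) \<Rightarrow> real" and \<epsilon> :: real
  assumes walk: "walk_assumptions P0 c \<epsilon>"
begin

lemma finite_step_supp: "finite (step_supp P0 c)"
proof -
  have "step_supp P0 c = {u. P0 u \<noteq> 0} \<union> {u. c u \<noteq> 0}" by (auto simp: step_supp_def)
  then show ?thesis using walk by (simp add: walk_assumptions_def del: Collect_disj_eq)
qed

lemma step_prob_nonneg: "0 \<le> step_prob P0 \<epsilon> c \<eta> u"
  using walk by (auto simp: walk_assumptions_def step_prob_def spin_def)

lemma c_zero: "c 0 = 0"
  using walk by (metis walk_assumptions_def minus_zero equal_neg_zero)

lemma step_prob_zero: "step_prob P0 \<epsilon> c \<eta> 0 = P0 0"
  by (simp add: step_prob_def c_zero)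

lemma P0_zero_bounds: "0 \<le> P0 0" "P0 0 < 1"
proof -
  have "0 \<le> P0 0" "P0 0 + \<epsilon> * c 0 < 1" using walk by (simp_all add: walk_assumptions_def)
  then show "0 \<le> P0 0" "P0 0 < 1" by (simp_all add: c_zero)
qed

lemma convex_comb_P0_zero_bounds:
  assumes "0 \<le> m" "m < 1"
  shows "0 \<le> m + (1 - m) * P0 0" "m + (1 - m) * P0 0 < 1"
proof -
  have "(1 - m) * P0 0 < 1 - m"
    using assms(2) P0_zero_bounds(2) mult_strict_left_mono[of "P0 0" 1 "1 - m"] by simp
  moreover have "0 \<le> (1 - m) * P0 0"
    using assms(2) P0_zero_bounds(1) by simp
  ultimately show "0 \<le> m + (1 - m) * P0 0" "m + (1 - m) * P0 0 < 1"
    using assms(1) by linarith+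
qed

lemma sum_c_step_supp: "(\<Sum>u\<in>step_supp P0 c. c u) = 0"
proof -
  have c_odd: "c (- u) = - c u" for u using walk by (simp add: walk_assumptions_def)
  have P0_even: "P0 (- u) = P0 u" for u using walk by (simp add: walk_assumptions_def)
  have "(\<Sum>u\<in>step_supp P0 c. c u) = (\<Sum>u\<in>step_supp P0 c. c (- u))"
    by (rule sum.reindex_bij_witness[of _ uminus uminus]) (auto simp: step_supp_def c_odd P0_even)
  also have "\<dots> = - (\<Sum>u\<in>step_supp P0 c. c u)" by (simp add: c_odd sum_negf)
  finally show ?thesis by simp
qed

lemma sum_step_prob: "(\<Sum>u\<in>step_supp P0 c. step_prob P0 \<epsilon> c \<eta> u) = 1"
proof -
  have "(\<Sum>u\<in>step_supp P0 c. P0 u) = (\<Sum>u\<in>{u. P0 u \<noteq> 0}. P0 u)"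
    by (rule sum.mono_neutral_right) (use finite_step_supp in \<open>auto simp: step_supp_def\<close>)
  then have "(\<Sum>u\<in>step_supp P0 c. P0 u) = 1" using walk by (simp add: walk_assumptions_def)
  then show ?thesis
    by (simp add: step_prob_def sum.distrib sum_distrib_right[symmetric]
        sum_distrib_left[symmetric] sum_c_step_supp)
qed

lemma Tmap_nonneg:
  assumes "\<And>\<xi>. 0 \<le> h \<xi>"
  shows "0 \<le> Tmap P0 c \<epsilon> Q0 Q1 h \<eta>"
  unfolding Tmap_def using assms
  by (intro sum_nonneg mult_nonneg_nonneg step_prob_nonneg integral_nonneg_AE) auto

lemma Tmap_const_one: "Tmap P0 c \<epsilon> Q0 Q1 (\<lambda>_. 1) \<eta> = 1"
  by (simp add: Tmap_def sum_step_prob prob_space.prob_space[OF prob_space_env_meas])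

lemma Tmap_le_fixed_spin:
  assumes Q0: "sym_stoch Q0" and m: "\<And>x y. Q0 x y \<le> m" "m \<le> 1" and K: "0 \<le> K"
    and h: "\<And>\<xi>. h \<xi> \<le> K * (if \<xi> 0 = s then 1 else 0)"
  shows "Tmap P0 c \<epsilon> Q0 Q1 h \<eta> \<le> K * (m + (1 - m) * P0 0)"
proof -
  define w where "w u = step_prob P0 \<epsilon> c \<eta> u" for u
  define I where "I u = (\<integral>\<xi>. h (\<lambda>x. \<xi> (u + x)) \<partial>env_meas Q0 Q1 \<eta>)" for u
  have h_shift: "h (\<lambda>x. \<xi> (u + x)) \<le> K * indicator {\<xi>. \<xi> u = s} \<xi>" for \<xi> u
    using h[of "\<lambda>x. \<xi> (u + x)"] by (cases "\<xi> u = s") (auto simp: indicator_def)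
  have I_le: "I u \<le> K * (if u = 0 then 1 else m)" for u
  proof -
    interpret prob_space "env_meas Q0 Q1 \<eta>" by (rule prob_space_env_meas)
    have "I u \<le> K * measure (env_meas Q0 Q1 \<eta>) {\<xi>. \<xi> u = s}"
      unfolding I_def by (intro integral_le_scaled_measure sets_env_meas_coordinate K h_shift)
    also have "\<dots> \<le> K * (if u = 0 then 1 else m)"
      using K m(1) mult_left_le[OF prob_le_1 K]
      by (cases "u = 0") (auto simp: measure_env_meas_off_walker[OF Q0] intro!: mult_left_mono)
    finally show ?thesis .
  qed
  have stay: "(\<Sum>u\<in>step_supp P0 c. w u * (if u = 0 then 1 else 0)) \<le> P0 0"
    using finite_step_supp P0_zero_bounds(1)
    by (simp add: if_distrib[of "(*) _"] sum.delta cong: if_cong) (simp add: w_def step_prob_zero)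
  have "(\<Sum>u\<in>step_supp P0 c. w u * (if u = 0 then 1 else m))
      = m * (\<Sum>u\<in>step_supp P0 c. w u) + (1 - m) * (\<Sum>u\<in>step_supp P0 c. w u * (if u = 0 then 1 else 0))"
  proof -
    have "w u * (if u = 0 then 1 else m) = m * w u + (1 - m) * (w u * (if u = 0 then 1 else 0))" for u
      by (simp add: algebra_simps)
    then show ?thesis by (simp add: sum.distrib sum_distrib_left)
  qed
  also have "\<dots> \<le> m + (1 - m) * P0 0"
    using stay m(2) by (simp add: w_def sum_step_prob mult_left_mono)
  finally have weights: "(\<Sum>u\<in>step_supp P0 c. w u * (if u = 0 then 1 else m)) \<le> m + (1 - m) * P0 0" .
  have "Tmap P0 c \<epsilon> Q0 Q1 h \<eta> = (\<Sum>u\<in>step_supp P0 c. w u * I u)"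
    by (simp add: Tmap_def I_def w_def)
  also have "\<dots> \<le> (\<Sum>u\<in>step_supp P0 c. w u * (K * (if u = 0 then 1 else m)))"
    using I_le by (intro sum_mono mult_left_mono) (simp_all add: w_def step_prob_nonneg)
  also have "\<dots> = K * (\<Sum>u\<in>step_supp P0 c. w u * (if u = 0 then 1 else m))"
    by (simp add: sum_distrib_left algebra_simps)
  also have "\<dots> \<le> K * (m + (1 - m) * P0 0)"
    using weights K by (rule mult_left_mono)
  finally show ?thesis .
qed

lemma cylf_nonneg: "0 \<le> cylf (Tmap P0 c \<epsilon> Q0 Q1) bs \<eta>"
  by (induction bs arbitrary: \<eta>) (simp_all add: Tmap_nonneg)

lemma cylf_le_power:
  assumes "sym_stoch Q0" "\<And>x y. Q0 x y \<le> m" "m \<le> 1" "0 \<le> m + (1 - m) * P0 0"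
  shows "cylf (Tmap P0 c \<epsilon> Q0 Q1) (b # bs) \<eta>
           \<le> (m + (1 - m) * P0 0) ^ length bs * (if \<eta> 0 = b then 1 else 0)"
proof (induction bs arbitrary: b \<eta>)
  case Nil
  show ?case by (simp add: Tmap_const_one)
next
  case (Cons b' bs)
  have "Tmap P0 c \<epsilon> Q0 Q1 (cylf (Tmap P0 c \<epsilon> Q0 Q1) (b' # bs)) \<eta>
          \<le> (m + (1 - m) * P0 0) ^ length bs * (m + (1 - m) * P0 0)"
    by (rule Tmap_le_fixed_spin[where m = m and s = b'])
      (rule assms(1), rule assms(2), rule assms(3), simp add: assms(4), rule Cons.IH)
  then show ?case by (simp add: mult.commute)
qed

lemma integral_cylf_le_power:
  assumes "prob_space N" "sym_stoch Q0" "\<And>x y. Q0 x y \<le> m" "m \<le> 1" "0 \<le> m + (1 - m) * P0 0"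
  shows "(\<integral>\<eta>. cylf (Tmap P0 c \<epsilon> Q0 Q1) (b # bs) \<eta> \<partial>N) \<le> (m + (1 - m) * P0 0) ^ length bs"
proof (rule prob_space.integral_le_const_nonneg[OF assms(1) cylf_nonneg])
  fix \<eta>
  have "cylf (Tmap P0 c \<epsilon> Q0 Q1) (b # bs) \<eta>
          \<le> (m + (1 - m) * P0 0) ^ length bs * (if \<eta> 0 = b then 1 else 0)"
    using assms(2-5) by (rule cylf_le_power)
  also have "\<dots> \<le> (m + (1 - m) * P0 0) ^ length bs"
    using assms(5) by simp
  finally show "cylf (Tmap P0 c \<epsilon> Q0 Q1) (b # bs) \<eta> \<le> (m + (1 - m) * P0 0) ^ length bs" .
qed

end

lemma emeasure_singleton_le_cylinder:
  assumes "prob_space N" "sets N = sets Omega_plus"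
  shows "emeasure N {z} \<le> ennreal (measure N {\<zeta> \<in> space Omega_plus. \<forall>i < n. \<zeta> i = z i})"
proof -
  interpret prob_space N by fact
  have "{\<zeta> \<in> space Omega_plus. \<forall>i < n. \<zeta> i = z i} \<in> sets N"
    unfolding assms(2) Omega_plus_def by measurable
  moreover have "{z} \<subseteq> {\<zeta> \<in> space Omega_plus. \<forall>i < n. \<zeta> i = z i}"
    by (simp add: Omega_plus_def space_PiM)
  ultimately have "emeasure N {z} \<le> emeasure N {\<zeta> \<in> space Omega_plus. \<forall>i < n. \<zeta> i = z i}"
    by (intro emeasure_mono)
  then show ?thesis by (simp add: emeasure_eq_measure)
qed

lemma ennreal_le_geometric_imp_zero:
  fixes x :: ennreal and \<theta> :: real
  assumes "\<And>n. x \<le> ennreal (\<theta> ^ n)" "0 \<le> \<theta>" "\<theta> < 1"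
  shows "x = 0"
proof -
  have "(\<lambda>n. ennreal (\<theta> ^ n)) \<longlonglongrightarrow> ennreal 0"
    using assms(2,3) by (intro tendsto_ennrealI LIMSEQ_power_zero) auto
  then have "x \<le> 0" using assms(1) by (intro LIMSEQ_le_const) auto
  then show ?thesis by simp
qed

theorem lemma2:
  fixes P0 c :: "(int ^ ('d::finite)) \<Rightarrow> real" and \<epsilon> :: real
    and Q0 Q1 :: "bool \<Rightarrow> bool \<Rightarrow> real"
    and M \<mu>bar :: real
    and PiI :: "'d config measure"
    and wp :: "(nat \<Rightarrow> bool) measure"
  assumes walk: "walk_assumptions P0 c \<epsilon>"
    and Q0: "sym_stoch Q0" "0 < \<bar>second_eig Q0\<bar>" "\<bar>second_eig Q0\<bar> < 1"
    and Q1: "sym_stoch Q1"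
    and M: "M > 1"
    and T_HM: "\<forall>f \<in> HM M. Tmap P0 c \<epsilon> Q0 Q1 f \<in> HM M"
    and Pi_prob: "prob_space PiI"
    and Pi_dens: "\<exists>\<rho> C. \<rho> \<in> borel_measurable Pi0 \<and> (\<forall>\<eta>. 0 \<le> \<rho> \<eta> \<and> \<rho> \<eta> \<le> C) \<and>
                        PiI = density Pi0 (\<lambda>\<eta>. ennreal (\<rho> \<eta>))"
    and Pi_inv: "\<forall>A \<in> sets (Omega_M :: 'd config measure).
                   (\<integral>\<eta>. Tmap P0 c \<epsilon> Q0 Q1 (indicator A :: 'd config \<Rightarrow> real) \<eta> \<partial>PiI) = measure PiI A"
    and mubar: "0 < \<mu>bar" "\<mu>bar < 1"
    and contr: "\<forall>f \<in> HM M. (\<integral>\<eta>. f \<eta> \<partial>PiI) = 0 \<longrightarrow>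
                   normM M (Tmap P0 c \<epsilon> Q0 Q1 f) \<le> ennreal \<mu>bar * normM M f"
    and mustar: "M * sqrt (\<mu>bar * (1 + 2 * \<mu>bar)) < 1"
    and wp_prob: "prob_space wp" "sets wp = sets Omega_plus"
    and wp_law: "\<forall>bs. measure wp {\<zeta> \<in> space Omega_plus. \<forall>i < length bs. \<zeta> i = bs ! i}
                        = (\<integral>\<eta>. cylf (Tmap P0 c \<epsilon> Q0 Q1) bs \<eta> \<partial>PiI)"
  shows "\<forall>z. emeasure wp {z} = 0"
proof
  fix z :: "nat \<Rightarrow> bool"
  obtain m where m: "0 \<le> m" "m < 1" "\<And>x y. Q0 x y \<le> m"
    using sym_stoch_entries_bounded[OF Q0(1) Q0(3)] by blast
  define \<theta> where "\<theta> = m + (1 - m) * P0 0"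
  have \<theta>: "0 \<le> \<theta>" "\<theta> < 1"
    unfolding \<theta>_def using convex_comb_P0_zero_bounds[OF walk m(1,2)] by simp_all
  show "emeasure wp {z} = 0"
  proof (rule ennreal_le_geometric_imp_zero[OF _ \<theta>])
    fix n
    have "emeasure wp {z} \<le> ennreal (measure wp {\<zeta> \<in> space Omega_plus. \<forall>i < Suc n. \<zeta> i = z i})"
      by (rule emeasure_singleton_le_cylinder[OF wp_prob])
    also have "measure wp {\<zeta> \<in> space Omega_plus. \<forall>i < Suc n. \<zeta> i = z i}
        = (\<integral>\<eta>. cylf (Tmap P0 c \<epsilon> Q0 Q1) (map z [0..<Suc n]) \<eta> \<partial>PiI)"
      using wp_law[rule_format, of "map z [0..<Suc n]"] by (simp del: upt_Suc)
    also have "map z [0..<Suc n] = z 0 # map z [1..<Suc n]"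
      by (simp add: upt_conv_Cons del: upt_Suc)
    also have "(\<integral>\<eta>. cylf (Tmap P0 c \<epsilon> Q0 Q1) (z 0 # map z [1..<Suc n]) \<eta> \<partial>PiI)
        \<le> \<theta> ^ length (map z [1..<Suc n])"
      unfolding \<theta>_def using \<theta>(1) m(2)
      by (intro integral_cylf_le_power[OF walk Pi_prob Q0(1), where m = m] m(3)) (simp_all add: \<theta>_def)
    finally show "emeasure wp {z} \<le> ennreal (\<theta> ^ n)" by (simp add: ennreal_leI del: upt_Suc)
  qed
qed

end
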